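(* Let $w$ be a word of length $n \geq 9$ over some alphabet such that $w$ contains no $3$-antipower as a factor and $w$ contains exactly three distinct letters. Then, up to a bijective renaming of the letters (to $0,1,2$), the following hold: (a) if $n \equiv 0 \pmod 3$, there is no such $w$; (b) if $n \equiv 1 \pmod 3$, then $w = 01^{n-2}2$; (c) if $n \equiv 2 \pmod 3$, then $w$ is one of $001^{n-3}2$, $010^{n-3}2$, $01^{n-2}2$, $01^{n-3}21$, or $01^{n-3}22$.
   Context: A $3$-antipower is a word $u_1u_2u_3$ with $|u_1|=|u_2|=|u_3|$ and $u_1,u_2,u_3$ pairwise distinct; a factor is a contiguous subword. $a^m$ denotes $m$ consecutive copies of the letter $a$. *)

theory Defs
  imports Main "HOL-Library.Sublist"
begin

definition antipower3 :: "'a list \<Rightarrow> bool" where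
  "antipower3 x \<longleftrightarrow> (\<exists>u1 u2 u3. x = u1 @ u2 @ u3 \<and>
      length u1 = length u2 \<and> length u2 = length u3 \<and>
      u1 \<noteq> u2 \<and> u1 \<noteq> u3 \<and> u2 \<noteq> u3)"

definition has_3antipower_factor :: "'a list \<Rightarrow> bool" where
  "has_3antipower_factor w \<longleftrightarrow> (\<exists>x. sublist x w \<and> antipower3 x)"

end

(*
  Induction on the length from 9. The base case is a finite check: enumerating the words of
  length 9 over {0, 1, 2} letter by letter, discarding those with an antipower suffix, leaves
  no word containing all three letters.

  For the step, let w have length n + 1. If its last letter occurs earlier, then w without it
  is still ternary and antipower-free, hence by induction a normal form of length n up to
  renaming, and checking the one-letter extensions of the normal forms shows that w is a normal
  form of length n + 1. If instead its first letter occurs later, the same applies to the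
  reversal of w, and the normal forms are closed under reversal up to renaming. Otherwise
  w = a c^(n-1) b with a, b, c distinct, and this word is itself an antipower when 3 divides
  its length.
*)
theory Submission
  imports Defs
begin

definition thirds :: "'a list \<Rightarrow> 'a list list" where
  "thirds x = (let k = length x div 3 in [take k x, take k (drop k x), drop (2 * k) x])"

lemma thirds_append:
  assumes "length u1 = k" "length u2 = k" "length u3 = k"
  shows "thirds (u1 @ u2 @ u3) = [u1, u2, u3]"
proof -
  have "length (u1 @ u2 @ u3) div 3 = k" using assms by simp
  then show ?thesis using assms by (simp add: thirds_def)
qed

lemma antipower3_iff_thirds: "antipower3 x \<longleftrightarrow> 3 dvd length x \<and> distinct (thirds x)"
proof
  assume "antipower3 x"
  then obtain u1 u2 u3 where x: "x = u1 @ u2 @ u3"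
    and len: "length u1 = length u2" "length u2 = length u3"
    and neq: "u1 \<noteq> u2" "u1 \<noteq> u3" "u2 \<noteq> u3"
    unfolding antipower3_def by blast
  have "length x = 3 * length u1"
    using x len by simp
  moreover have "thirds x = [u1, u2, u3]"
    unfolding x using len by (intro thirds_append) auto
  ultimately show "3 dvd length x \<and> distinct (thirds x)"
    using neq by simp
next
  assume "3 dvd length x \<and> distinct (thirds x)"
  then obtain k where k: "length x = 3 * k" and d: "distinct (thirds x)" by blast
  define u1 u2 u3 where "u1 = take k x" and "u2 = take k (drop k x)" and "u3 = drop (2 * k) x"
  have "x = u1 @ u2 @ u3"
    unfolding u1_def u2_def u3_def by (metis append_take_drop_id drop_drop mult_2 add.commute)
  moreover have "length u1 = k" "length u2 = k" "length u3 = k"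
    using k by (simp_all add: u1_def u2_def u3_def)
  moreover have "thirds x = [u1, u2, u3]"
    using k by (simp add: thirds_def u1_def u2_def u3_def)
  ultimately show "antipower3 x"
    using d unfolding antipower3_def by (metis distinct_length_2_or_more)
qed

lemma thirds_map: "thirds (map f x) = map (map f) (thirds x)"
  by (simp add: thirds_def Let_def take_map drop_map)

lemma antipower3_mapD: "antipower3 (map f x) \<Longrightarrow> antipower3 x"
  by (simp add: antipower3_iff_thirds thirds_map distinct_map)

lemma antipower3_rev:
  assumes "antipower3 x"
  shows "antipower3 (rev x)"
proof -
  obtain u1 u2 u3 where "x = u1 @ u2 @ u3" "length u1 = length u2" "length u2 = length u3"
    "u1 \<noteq> u2" "u1 \<noteq> u3" "u2 \<noteq> u3"
    using assms unfolding antipower3_def by blast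
  then show ?thesis
    unfolding antipower3_def by (intro exI[of _ "rev u3"] exI[of _ "rev u2"] exI[of _ "rev u1"]) simp
qed

lemma has_3antipower_factor_sublist:
  "sublist u w \<Longrightarrow> has_3antipower_factor u \<Longrightarrow> has_3antipower_factor w"
  unfolding has_3antipower_factor_def by (meson sublist_order.order.trans)

lemma has_3antipower_factor_mapD:
  "has_3antipower_factor (map f w) \<Longrightarrow> has_3antipower_factor w"
  unfolding has_3antipower_factor_def by (metis sublist_map_rightE antipower3_mapD)

lemma has_3antipower_factor_rev [simp]:
  "has_3antipower_factor (rev w) \<longleftrightarrow> has_3antipower_factor w"
  unfolding has_3antipower_factor_def by (metis antipower3_rev rev_rev_ident sublist_rev_left)

lemma has_3antipower_factor_if_distinct_triple:
  assumes "distinct [a, b, c]" and "sublist [a, b, c] w"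
  shows "has_3antipower_factor w"
proof -
  have "antipower3 [a, b, c]"
    using assms(1) unfolding antipower3_def
    by (intro exI[of _ "[a]"] exI[of _ "[b]"] exI[of _ "[c]"]) simp
  then show ?thesis using assms(2) unfolding has_3antipower_factor_def by blast
qed

lemma has_3antipower_factor_if_mismatches:
  assumes "length x = 3 * q"
    and "i1 < q" "x ! i1 \<noteq> x ! (q + i1)"
    and "i2 < q" "x ! i2 \<noteq> x ! (2 * q + i2)"
    and "i3 < q" "x ! (q + i3) \<noteq> x ! (2 * q + i3)"
  shows "has_3antipower_factor x"
proof -
  have "thirds x = [take q x, take q (drop q x), drop (2 * q) x]"
    using assms(1) by (simp add: thirds_def)
  moreover have "take q x ! i1 \<noteq> take q (drop q x) ! i1"
    using assms(1-3) by (simp add: add.commute)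
  moreover have "take q x ! i2 \<noteq> drop (2 * q) x ! i2"
    using assms(1,4,5) by (simp add: add.commute)
  moreover have "take q (drop q x) ! i3 \<noteq> drop (2 * q) x ! i3"
    using assms(1,6,7) by (simp add: add.commute)
  ultimately have "antipower3 x"
    using assms(1) unfolding antipower3_iff_thirds by auto
  then show ?thesis unfolding has_3antipower_factor_def by blast
qed

definition antipower_suffix_free :: "'a list \<Rightarrow> bool" where
  "antipower_suffix_free w \<longleftrightarrow>
     list_all (\<lambda>k. \<not> distinct (thirds (drop (length w - 3 * k) w))) [1..<Suc (length w div 3)]"

lemma antipower_suffix_free_if_not_has:
  assumes "\<not> has_3antipower_factor w"
  shows "antipower_suffix_free w"
  unfolding antipower_suffix_free_def list_all_iff
proof
  fix k assume "k \<in> set [1..<Suc (length w div 3)]"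
  then have "length (drop (length w - 3 * k) w) = 3 * k" by auto
  moreover have "sublist (drop (length w - 3 * k) w) w" by (simp add: suffix_drop)
  ultimately show "\<not> distinct (thirds (drop (length w - 3 * k) w))"
    using assms unfolding has_3antipower_factor_def antipower3_iff_thirds by force
qed

fun ternary_candidates :: "nat \<Rightarrow> nat list list" where
  "ternary_candidates 0 = [[]]"
| "ternary_candidates (Suc n) =
     [w @ [x]. w \<leftarrow> ternary_candidates n, x \<leftarrow> [0, 1, 2], antipower_suffix_free (w @ [x])]"

lemma ternary_candidates_complete:
  "length w = n \<Longrightarrow> set w \<subseteq> {0, 1, 2} \<Longrightarrow> \<not> has_3antipower_factor w
    \<Longrightarrow> w \<in> set (ternary_candidates n)"
proof (induction n arbitrary: w)
  case 0
  then show ?case by simp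
next
  case (Suc n)
  then obtain u x where w: "w = u @ [x]"
    by (cases w rule: rev_cases) auto
  moreover from this have "length u = n" using Suc.prems(1) by simp
  moreover have "\<not> has_3antipower_factor u"
    using Suc.prems(3) has_3antipower_factor_sublist[of u w] w by auto
  ultimately have "u \<in> set (ternary_candidates n)"
    using Suc.IH Suc.prems(2) by auto
  moreover have "x \<in> {0, 1, 2}" using Suc.prems(2) w by auto
  moreover have "antipower_suffix_free w"
    using Suc.prems(3) by (rule antipower_suffix_free_if_not_has)
  ultimately show ?case using w by auto
qed

lemma ternary_candidates_9_miss_a_letter:
  "list_all (\<lambda>w. \<not> (0 \<in> set w \<and> 1 \<in> set w \<and> 2 \<in> set w)) (ternary_candidates 9)"
  by code_simp

lemma has_3antipower_factor_length_9:
  assumes "length w = 9" and "set w = {0, 1, 2 :: nat}"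
  shows "has_3antipower_factor w"
  using ternary_candidates_complete[of w 9] ternary_candidates_9_miss_a_letter assms
  by (auto simp: list_all_iff)

definition normal_forms :: "nat \<Rightarrow> nat list set" where
  "normal_forms n =
    (if n mod 3 = 1 then {[0] @ replicate (n - 2) 1 @ [2]}
     else if n mod 3 = 2 then
       {[0, 0] @ replicate (n - 3) 1 @ [2],
        [0, 1] @ replicate (n - 3) 0 @ [2],
        [0] @ replicate (n - 2) 1 @ [2],
        [0] @ replicate (n - 3) 1 @ [2, 1],
        [0] @ replicate (n - 3) 1 @ [2, 2]}
     else {})"

lemma has_3antipower_factor_0_1s_2:
  "q \<ge> 1 \<Longrightarrow> has_3antipower_factor ([0] @ replicate (3 * q - 2) 1 @ [2 :: nat])"
  by (rule has_3antipower_factor_if_mismatches[of _ q 0 0 "q - 1"]) (auto simp: nth_append)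

lemma has_3antipower_factor_normal_forms_snoc_mod_0:
  assumes "v \<in> normal_forms n" and "Suc n = 3 * q" and "q \<ge> 4"
  shows "has_3antipower_factor (v @ [y])"
proof -
  have "n mod 3 = 2" and n: "n - 3 = 3 * q - 4" "n - 2 = 3 * q - 3"
    using assms(2) by presburger+
  then consider
      "v = [0, 0] @ replicate (3 * q - 4) 1 @ [2]"
    | "v = [0, 1] @ replicate (3 * q - 4) 0 @ [2]"
    | "v = [0] @ replicate (3 * q - 3) 1 @ [2]"
    | "v = [0] @ replicate (3 * q - 4) 1 @ [2, 1]"
    | "v = [0] @ replicate (3 * q - 4) 1 @ [2, 2]"
    using assms(1) unfolding normal_forms_def by auto
  \<comment> \<open>The middle third is constant, the last third contains the letter 2, and the first
    third differs from both within its first two letters.\<close>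
  then show ?thesis
  proof cases
    case 1
    show ?thesis
      by (rule has_3antipower_factor_if_mismatches[of _ q 0 0 "q - 2"])
        (use 1 assms in \<open>auto simp: nth_append\<close>)
  next
    case 2
    show ?thesis
      by (rule has_3antipower_factor_if_mismatches[of _ q 1 1 "q - 2"])
        (use 2 assms in \<open>auto simp: nth_append\<close>)
  next
    case 3
    show ?thesis
      by (rule has_3antipower_factor_if_mismatches[of _ q 0 0 "q - 2"])
        (use 3 assms in \<open>auto simp: nth_append\<close>)
  next
    case 4
    show ?thesis
      by (rule has_3antipower_factor_if_mismatches[of _ q 0 0 "q - 3"])
        (use 4 assms in \<open>auto simp: nth_append\<close>)
  next
    case 5
    show ?thesis
      by (rule has_3antipower_factor_if_mismatches[of _ q 0 0 "q - 3"])
        (use 5 assms in \<open>auto simp: nth_append\<close>)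
  qed
qed

lemma normal_forms_snoc:
  assumes "n \<ge> 9" and "v \<in> normal_forms n" and "y \<in> {0, 1, 2}"
    and "\<not> has_3antipower_factor (v @ [y])"
  shows "v @ [y] \<in> normal_forms (Suc n)"
proof -
  consider "n mod 3 = 0" | "n mod 3 = 1" | "n mod 3 = 2" by linarith
  then show ?thesis
  proof cases
    case 1
    then show ?thesis using assms(2) by (simp add: normal_forms_def)
  next
    case 2
    then have v: "v = [0] @ replicate (n - 2) 1 @ [2]"
      using assms(2) by (simp add: normal_forms_def)
    have "y \<noteq> 0"
    proof
      assume "y = 0"
      moreover have "n - 2 = Suc (n - 3)" using assms(1) by simp
      ultimately have "v @ [y] = ([0] @ replicate (n - 3) 1) @ [1, 2, 0] @ []"
        using v by (simp add: replicate_app_Cons_same)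
      then have "sublist [1, 2, 0] (v @ [y])" by (metis sublist_appendI)
      then show False
        using assms(4) has_3antipower_factor_if_distinct_triple[of "1 :: nat" 2 0] by simp
    qed
    moreover have "Suc n mod 3 = 2" using 2 by presburger
    ultimately show ?thesis using assms(3) v by (auto simp: normal_forms_def)
  next
    case 3
    then have "3 dvd Suc n" by presburger
    then obtain q where q: "Suc n = 3 * q" by (elim dvdE)
    then have "q \<ge> 4" using assms(1) by linarith
    then show ?thesis
      using has_3antipower_factor_normal_forms_snoc_mod_0[OF assms(2) q] assms(4) by blast
  qed
qed

lemma normal_forms_rev:
  assumes "v \<in> normal_forms n"
  shows "\<exists>g. bij_betw g {0, 1, 2} {0, 1, 2 :: nat} \<and> map g (rev v) \<in> normal_forms n"
proof -
  have "bij_betw (\<lambda>x. 2 - x) {0, 1, 2} {0, 1, 2 :: nat}"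
    and "bij_betw (\<lambda>x. (x + 1) mod 3) {0, 1, 2} {0, 1, 2 :: nat}"
    and "bij_betw (\<lambda>x. (x + 2) mod 3) {0, 1, 2} {0, 1, 2 :: nat}"
    by (auto simp: bij_betw_def inj_on_def image_def)
  moreover have "map (\<lambda>x. 2 - x) (rev v) \<in> normal_forms n
      \<or> map (\<lambda>x. (x + 1) mod 3) (rev v) \<in> normal_forms n
      \<or> map (\<lambda>x. (x + 2) mod 3) (rev v) \<in> normal_forms n"
    using assms by (auto simp: normal_forms_def split: if_splits)
  ultimately show ?thesis by blast
qed

definition renamable_into :: "'a list \<Rightarrow> nat list set \<Rightarrow> bool" where
  "renamable_into w A \<longleftrightarrow> (\<exists>f. bij_betw f (set w) {0, 1, 2} \<and> map f w \<in> A)"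

lemma renamable_into_normal_forms_rev:
  assumes "renamable_into w (normal_forms n)"
  shows "renamable_into (rev w) (normal_forms n)"
proof -
  obtain f where f: "bij_betw f (set w) {0, 1, 2}" "map f w \<in> normal_forms n"
    using assms unfolding renamable_into_def by blast
  obtain g where g: "bij_betw g {0, 1, 2} {0, 1, 2 :: nat}" "map g (rev (map f w)) \<in> normal_forms n"
    using normal_forms_rev[OF f(2)] by blast
  have "bij_betw (g \<circ> f) (set (rev w)) {0, 1, 2}"
    using bij_betw_trans[OF f(1) g(1)] by simp
  moreover have "map (g \<circ> f) (rev w) \<in> normal_forms n"
    using g(2) by (simp add: rev_map)
  ultimately show ?thesis unfolding renamable_into_def by blast
qed

lemma renamable_into_normal_forms_snoc:
  assumes "n \<ge> 9" and "renamable_into u (normal_forms n)" and "x \<in> set u"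
    and "\<not> has_3antipower_factor (u @ [x])"
  shows "renamable_into (u @ [x]) (normal_forms (Suc n))"
proof -
  obtain f where f: "bij_betw f (set u) {0, 1, 2}" "map f u \<in> normal_forms n"
    using assms(2) unfolding renamable_into_def by blast
  have "f x \<in> {0, 1, 2}" using bij_betw_apply[OF f(1) assms(3)] .
  moreover have "\<not> has_3antipower_factor (map f u @ [f x])"
    using assms(4) has_3antipower_factor_mapD[of f "u @ [x]"] by auto
  ultimately have "map f (u @ [x]) \<in> normal_forms (Suc n)"
    using normal_forms_snoc[OF assms(1) f(2)] by simp
  moreover have "set (u @ [x]) = set u" using assms(3) by auto
  ultimately show ?thesis using f(1) unfolding renamable_into_def by auto
qed

lemma renamable_into_normal_forms_unique_ends:
  assumes "card (set (a # m @ [b])) = 3" and "a \<notin> set (m @ [b])" and "b \<notin> set (a # m)"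
    and "\<not> has_3antipower_factor (a # m @ [b])"
  shows "renamable_into (a # m @ [b]) (normal_forms (length m + 2))"
proof -
  have "card (set m) = 1"
    using assms(1-3) by (simp add: card_insert_if)
  then obtain c where c: "set m = {c}" using card_1_singletonE by blast
  then have m: "m = replicate (length m) c"
    by (metis replicate_length_same singletonD)
  have abc: "a \<noteq> b" "c \<noteq> a" "c \<noteq> b" using assms(2,3) c by auto
  define f where "f z = (if z = a then 0 else if z = b then 2 else 1 :: nat)" for z
  have "bij_betw f (set (a # m @ [b])) {0, 1, 2}"
    using abc c unfolding f_def bij_betw_def inj_on_def by auto
  moreover have fw: "map f (a # m @ [b]) = [0] @ replicate (length m) 1 @ [2]"
    using abc by (subst m) (simp add: f_def map_replicate_const)
  moreover have "(length m + 2) mod 3 \<noteq> 0"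
  proof
    assume "(length m + 2) mod 3 = 0"
    then have "3 dvd length m + 2" by presburger
    then obtain q where q: "length m + 2 = 3 * q" by (elim dvdE)
    then have "q \<ge> 1" and "length m = 3 * q - 2" by auto
    then have "has_3antipower_factor (map f (a # m @ [b]))"
      using has_3antipower_factor_0_1s_2[of q] fw by simp
    then show False using assms(4) has_3antipower_factor_mapD by blast
  qed
  ultimately show ?thesis
    unfolding renamable_into_def normal_forms_def by auto
qed

theorem renamable_into_normal_forms:
  "n \<ge> 9 \<Longrightarrow> length w = n \<Longrightarrow> \<not> has_3antipower_factor w \<Longrightarrow> card (set w) = 3
    \<Longrightarrow> renamable_into w (normal_forms n)"
proof (induction n arbitrary: w rule: nat_induct_at_least)
  case base
  have "\<exists>f. bij_betw f (set w) {0, 1, 2 :: nat}"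
    using base.prems(3) by (intro finite_same_card_bij) auto
  then obtain f where f: "bij_betw f (set w) {0, 1, 2 :: nat}" ..
  then have "set (map f w) = {0, 1, 2}" by (simp add: bij_betw_def)
  then have "has_3antipower_factor (map f w)"
    using base.prems(1) has_3antipower_factor_length_9 by simp
  then show ?case using base.prems(2) has_3antipower_factor_mapD by blast
next
  case (Suc n)
  have snoc: "renamable_into v (normal_forms (Suc n))"
    if len_v: "length v = Suc n" and free_v: "\<not> has_3antipower_factor v"
      and card_v: "card (set v) = 3" and last_v: "last v \<in> set (butlast v)"
    for v :: "'a list"
  proof -
    obtain u x where v: "v = u @ [x]"
      by (cases v rule: rev_cases) (use len_v in auto)
    then have len: "length u = n" using len_v by simp
    have x: "x \<in> set u" using last_v v by simp
    have "\<not> has_3antipower_factor u"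
      using free_v has_3antipower_factor_sublist[of u v] v by auto
    moreover have "card (set u) = 3" using card_v v x by (simp add: insert_absorb)
    ultimately have "renamable_into u (normal_forms n)" by (rule Suc.IH[OF len])
    from renamable_into_normal_forms_snoc[OF Suc.hyps this x] free_v show ?thesis
      unfolding v .
  qed
  have "w \<noteq> []" using Suc.prems(1) by auto
  consider "last w \<in> set (butlast w)" | "hd w \<in> set (tl w)"
    | "last w \<notin> set (butlast w)" "hd w \<notin> set (tl w)"
    by blast
  then show ?case
  proof cases
    case 1
    then show ?thesis by (rule snoc[OF Suc.prems])
  next
    case 2
    then have "renamable_into (rev w) (normal_forms (Suc n))"
      using snoc[of "rev w"] Suc.prems \<open>w \<noteq> []\<close> by (simp add: last_rev)
    then show ?thesis using renamable_into_normal_forms_rev[of "rev w"] by simp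
  next
    case 3
    obtain a t where "w = a # t" using \<open>w \<noteq> []\<close> by (cases w) auto
    moreover have "t \<noteq> []" using calculation Suc.prems(1) Suc.hyps by auto
    ultimately obtain m b where w: "w = a # m @ [b]" by (metis append_butlast_last_id)
    then show ?thesis
      using 3 Suc.prems renamable_into_normal_forms_unique_ends[of a m b] by simp
  qed
qed

theorem theorem9:
  fixes w :: "'a list" and n :: nat
  assumes "length w = n" and "n \<ge> 9"
    and "\<not> has_3antipower_factor w"
    and "card (set w) = 3"
  shows "n mod 3 \<noteq> 0
    \<and> (n mod 3 = 1 \<longrightarrow> (\<exists>f. bij_betw f (set w) {0, 1, 2 :: nat} \<and>
           map f w = [0] @ replicate (n - 2) 1 @ [2]))
    \<and> (n mod 3 = 2 \<longrightarrow> (\<exists>f. bij_betw f (set w) {0, 1, 2 :: nat} \<and>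
           map f w \<in> { [0, 0] @ replicate (n - 3) 1 @ [2],
                        [0, 1] @ replicate (n - 3) 0 @ [2],
                        [0] @ replicate (n - 2) 1 @ [2],
                        [0] @ replicate (n - 3) 1 @ [2, 1],
                        [0] @ replicate (n - 3) 1 @ [2, 2] }))"
proof -
  obtain f where "bij_betw f (set w) {0, 1, 2}" and "map f w \<in> normal_forms n"
    using renamable_into_normal_forms[OF assms(2,1,3,4)] unfolding renamable_into_def by blast
  then show ?thesis
    by (auto simp: normal_forms_def split: if_splits intro!: exI[of _ f])
qed

end
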